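(* Let $\Gamma$ be a triangulation of a connected closed surface $M$ and let $\tau$ be a $z$-orientation of $\Gamma$. Then every face of $\Gamma$ satisfies exactly one of the following: (I) the face contains two edges of type I and its third edge is of type II; (II) all three edges of the face are of type II and, with their directions, they form a directed cycle.
   Context: Let $M$ be a connected closed $2$-dimensional surface (not necessarily orientable). A triangulation of $M$ is a $2$-cell embedding of a connected simple finite graph in $M$ such that every face is a triangle; then every edge lies in exactly two distinct faces, and two distinct faces meet in an edge, in a vertex, or not at all. A zigzag in a triangulation $\Gamma$ is a sequence of edges $(e_i)_{i\in\mathbb N}$ such that for every $i$: $e_i$ and $e_{i+1}$ are distinct edges of a common face; the face containing $e_i,e_{i+1}$ is different from the face containing $e_{i+1},e_{i+2}$; and $e_i$, $e_{i+2}$ have no common vertex. Such a sequence is periodic and is regarded as a cyclic sequence $e_1,\dots,e_n$ ($n$ the minimal period); a zigzag passes through each of its edges in a definite direction (from the vertex shared with the previous edge to the vertex shared with the next). The reversed sequence $Z^{-1}$ is again a zigzag and $Z\neq Z^{-1}$. If $\Gamma$ has exactly $k$ zigzags up to reversal, a $z$-orientation of $\Gamma$ is a set $\tau$ of $k$ zigzags containing exactly one of $Z,Z^{-1}$ for every zigzag $Z$. For a $z$-orientation $\tau$, each edge $e$ either occurs twice in one zigzag of $\tau$ and in no other, or occurs once in each of exactly two distinct zigzags of $\tau$ and in no other. The edge $e$ is of type I if these two passages through $e$ are in opposite directions, and of type II if they are in the same direction; edges of type II are regarded as directed edges with this common direction. *)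

theory Defs
  imports Main
begin

definition tri_edges :: "'v set set \<Rightarrow> 'v set set" where
  "tri_edges Fs = {e. card e = 2 \<and> (\<exists>F\<in>Fs. e \<subseteq> F)}"

definition triangulation :: "'v set \<Rightarrow> 'v set set \<Rightarrow> bool" where
  "triangulation V Fs \<longleftrightarrow>
     finite V \<and> Fs \<noteq> {} \<and>
     (\<forall>F\<in>Fs. F \<subseteq> V \<and> card F = 3) \<and>
     (\<forall>v\<in>V. \<exists>F\<in>Fs. v \<in> F) \<and>
     (\<forall>e\<in>tri_edges Fs. card {F\<in>Fs. e \<subseteq> F} = 2) \<and>
     \<comment> \<open>the link of every vertex is connected (hence a single cycle): closed surface\<close>
     (\<forall>v\<in>V. \<forall>x y. {v,x} \<in> tri_edges Fs \<and> {v,y} \<in> tri_edges Fs \<longrightarrow>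
          (\<lambda>p q. {v,p,q} \<in> Fs)\<^sup>*\<^sup>* x y) \<and>
     \<comment> \<open>connectedness\<close>
     (\<forall>u\<in>V. \<forall>w\<in>V. (\<lambda>x y. {x,y} \<in> tri_edges Fs)\<^sup>*\<^sup>* u w)"

text \<open>Zigzags, represented as bi-infinite (periodic) sequences of edges indexed by int;
  a zigzag as a cyclic sequence corresponds to the set of all its shifts.\<close>

definition is_zigzag :: "'v set set \<Rightarrow> (int \<Rightarrow> 'v set) \<Rightarrow> bool" where
  "is_zigzag Fs z \<longleftrightarrow>
     (\<forall>i. z i \<in> tri_edges Fs \<and> z i \<noteq> z (i+1) \<and>
          (\<exists>F\<in>Fs. z i \<subseteq> F \<and> z (i+1) \<subseteq> F) \<and>
          z i \<union> z (i+1) \<noteq> z (i+1) \<union> z (i+2) \<and>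
          z i \<inter> z (i+2) = {})"

definition zshift :: "int \<Rightarrow> (int \<Rightarrow> 'v set) \<Rightarrow> int \<Rightarrow> 'v set" where
  "zshift k z = (\<lambda>i. z (i + k))"

definition zrev :: "(int \<Rightarrow> 'v set) \<Rightarrow> int \<Rightarrow> 'v set" where
  "zrev z = (\<lambda>i. z (- i))"

definition z_orientation :: "'v set set \<Rightarrow> (int \<Rightarrow> 'v set) set \<Rightarrow> bool" where
  "z_orientation Fs T \<longleftrightarrow>
     (\<forall>z\<in>T. is_zigzag Fs z) \<and>
     (\<forall>z\<in>T. \<forall>k. zshift k z \<in> T) \<and>
     (\<forall>z. is_zigzag Fs z \<longrightarrow> (z \<in> T \<longleftrightarrow> zrev z \<notin> T))"

text \<open>Passages of T through edge e: the occurrences of e in zigzags of T, normalised to position 0.\<close>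

definition passages :: "(int \<Rightarrow> 'v set) set \<Rightarrow> 'v set \<Rightarrow> (int \<Rightarrow> 'v set) set" where
  "passages T e = {z\<in>T. z 0 = e}"

definition pdir :: "(int \<Rightarrow> 'v set) \<Rightarrow> 'v \<times> 'v" where
  "pdir z = (THE u. u \<in> z 0 \<inter> z (-1), THE v. v \<in> z 0 \<inter> z 1)"

definition edge_type_I :: "(int \<Rightarrow> 'v set) set \<Rightarrow> 'v set \<Rightarrow> bool" where
  "edge_type_I T e \<longleftrightarrow>
     (\<exists>z1 z2. z1 \<noteq> z2 \<and> passages T e = {z1, z2} \<and> pdir z1 \<noteq> pdir z2)"

definition edge_type_II :: "(int \<Rightarrow> 'v set) set \<Rightarrow> 'v set \<Rightarrow> bool" where
  "edge_type_II T e \<longleftrightarrow>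
     (\<exists>z1 z2. z1 \<noteq> z2 \<and> passages T e = {z1, z2} \<and> pdir z1 = pdir z2)"

definition type_II_directed :: "(int \<Rightarrow> 'v set) set \<Rightarrow> 'v set \<Rightarrow> 'v \<Rightarrow> 'v \<Rightarrow> bool" where
  "type_II_directed T e u v \<longleftrightarrow>
     (\<exists>z1 z2. z1 \<noteq> z2 \<and> passages T e = {z1, z2} \<and> pdir z1 = (u, v) \<and> pdir z2 = (u, v))"

end

theory Submission
  imports Defs
begin

text \<open>Call a flag (x, y, w) of a face (an ordering of its vertices) oriented if the unique zigzag
  passing the edges {x, y}, {y, w} in this order belongs to T; otherwise T contains its reverse.
  The two passages of T through an edge {x, y} of the face {x, y, w} are the ones crossing the
  face at y and at x, and they run from x to y iff the flag (x, y, w), respectively (w, x, y), is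
  oriented. So if P, Q, R are the orientations of (a, b, c), (b, c, a), (c, a, b), the edge {a, b}
  is of type II iff P = R, and cyclically; reversing (a, b, c) negates P, Q, R. Either P, Q, R are
  not all equal, and exactly one edge is of type II, or they are all equal, and the three edges
  are of type II and directed around the face.\<close>

lemma card_2_obtain_other:
  assumes "card A = 2" "y \<in> A"
  obtains x where "A = {x, y}" "x \<noteq> y"
  using assms by (auto simp: card_2_iff doubleton_eq_iff)

lemma card_2_eq_doubleton:
  assumes "card S = 2" "a \<in> S" "b \<in> S" "a \<noteq> b"
  shows "S = {a, b}"
  using assms by (auto simp: card_2_iff)

lemma two_subsets_of_triangle:
  assumes A: "card A = 2" and B: "card B = 2" and G: "card G = 3"
    and "A \<subseteq> G" "B \<subseteq> G" "A \<noteq> B"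
  obtains x y w where "x \<noteq> y" "y \<noteq> w" "x \<noteq> w" "A = {x, y}" "B = {y, w}" "G = {x, y, w}"
proof -
  have "A \<inter> B \<noteq> {}"
  proof
    assume "A \<inter> B = {}"
    then have "card (A \<union> B) = 4"
      using A B card_Un_disjoint[of A B] by (simp add: card_ge_0_finite)
    moreover have "card (A \<union> B) \<le> 3"
      using card_mono[of G "A \<union> B"] G \<open>A \<subseteq> G\<close> \<open>B \<subseteq> G\<close> by (simp add: card_ge_0_finite)
    ultimately show False by simp
  qed
  then obtain y where "y \<in> A" "y \<in> B" by blast
  obtain x where x: "A = {x, y}" "x \<noteq> y" using card_2_obtain_other[OF A \<open>y \<in> A\<close>] .
  obtain w where w: "B = {w, y}" "w \<noteq> y" using card_2_obtain_other[OF B \<open>y \<in> B\<close>] .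
  have "x \<noteq> w" using x w \<open>A \<noteq> B\<close> by blast
  have "{x, y, w} = G"
    using x w \<open>x \<noteq> w\<close> G \<open>A \<subseteq> G\<close> \<open>B \<subseteq> G\<close>
    by (intro card_subset_eq) (auto simp: card_ge_0_finite)
  then show ?thesis using that[of x y w] x w \<open>x \<noteq> w\<close> by (auto simp: insert_commute)
qed

lemma triple_orderings:
  assumes "{a', b', c'} = {a, b, c}" "a' \<noteq> b'" "b' \<noteq> c'" "a' \<noteq> c'"
  shows "(a', b', c') \<in> {(a, b, c), (b, c, a), (c, a, b), (c, b, a), (b, a, c), (a, c, b)}"
proof -
  have "a' \<in> {a, b, c}" "b' \<in> {a, b, c}" "c' \<in> {a, b, c}"
    "a \<in> {a', b', c'}" "b \<in> {a', b', c'}" "c \<in> {a', b', c'}"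
    using assms(1) by blast+
  then show ?thesis using assms(2-4) by auto
qed

definition triple_chain :: "('a \<Rightarrow> 'a \<Rightarrow> 'a \<Rightarrow> bool) \<Rightarrow> (int \<Rightarrow> 'a) \<Rightarrow> bool" where
  "triple_chain R z \<longleftrightarrow> (\<forall>i. R (z i) (z (i + 1)) (z (i + 2)))"

lemma triple_chain_shift: "triple_chain R z \<Longrightarrow> triple_chain R (\<lambda>i. z (i + k))"
  unfolding triple_chain_def by (metis add.commute add.left_commute)

lemma triple_chain_reverse:
  assumes sym: "\<And>A B C. R A B C \<Longrightarrow> R C B A" and "triple_chain R z"
  shows "triple_chain R (\<lambda>i. z (- i))"
  unfolding triple_chain_def
proof
  fix i
  have "R (z (- i - 2)) (z (- i - 2 + 1)) (z (- i - 2 + 2))"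
    using assms(2) unfolding triple_chain_def by blast
  then show "R (z (- i)) (z (- (i + 1))) (z (- (i + 2)))"
    using sym by (simp add: algebra_simps)
qed

lemma triple_chain_eqI:
  assumes unique: "\<And>A B C C'. R A B C \<Longrightarrow> R A B C' \<Longrightarrow> C = C'"
    and sym: "\<And>A B C. R A B C \<Longrightarrow> R C B A"
    and z: "triple_chain R z" and z': "triple_chain R z'"
    and "z 0 = z' 0" "z 1 = z' 1"
  shows "z = z'"
proof
  fix i :: int
  have "z i = z' i \<and> z (i + 1) = z' (i + 1)"
  proof (induction i rule: int_induct[where k = 0])
    case (step1 i)
    have "R (z i) (z (i + 1)) (z (i + 1 + 1))" "R (z' i) (z' (i + 1)) (z' (i + 1 + 1))"
      using z z' unfolding triple_chain_def by (simp_all add: add.assoc)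
    then show ?case using step1 unique by auto
  next
    case (step2 i)
    have "R (z (i - 1)) (z (i - 1 + 1)) (z (i - 1 + 2))" "R (z' (i - 1)) (z' (i - 1 + 1)) (z' (i - 1 + 2))"
      using z z' unfolding triple_chain_def by blast+
    then have "R (z (i + 1)) (z i) (z (i - 1))" "R (z' (i + 1)) (z' i) (z' (i - 1))"
      by (auto dest: sym simp: add.commute)
    then show ?case using step2 unique by auto
  qed (use assms in simp)
  then show "z i = z' i" ..
qed

lemma triple_ray_exists:
  assumes step: "\<And>A B. P A B \<Longrightarrow> \<exists>C. R A B C \<and> P B C" and "P A B"
  obtains f :: "nat \<Rightarrow> 'a" where "f 0 = A" "f 1 = B" "\<And>n. R (f n) (f (Suc n)) (f (Suc (Suc n)))"
proof -
  define next_pair where "next_pair p = (snd p, SOME C. R (fst p) (snd p) C \<and> P (snd p) C)" for p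
  define g where "g n = (next_pair ^^ n) (A, B)" for n
  have g_Suc: "g (Suc n) = next_pair (g n)" for n
    unfolding g_def by simp
  have next_pair: "R (fst p) (snd p) (snd (next_pair p)) \<and> P (fst (next_pair p)) (snd (next_pair p))"
    if "P (fst p) (snd p)" for p
    using someI_ex[OF step[OF that]] unfolding next_pair_def by simp
  have P_g: "P (fst (g n)) (snd (g n))" for n
    by (induction n) (simp_all add: g_def \<open>P A B\<close> next_pair)
  show ?thesis
  proof (rule that[of "\<lambda>n. fst (g n)"])
    show "fst (g 0) = A" "fst (g 1) = B"
      by (simp_all add: g_def next_pair_def)
    show "R (fst (g n)) (fst (g (Suc n))) (fst (g (Suc (Suc n))))" for n
      using next_pair[OF P_g[of n]] by (simp add: g_Suc next_pair_def)
  qed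
qed

text \<open>Glue a forward ray from (A, B) and a forward ray from (B, A) at the pair (A, B).\<close>

lemma triple_chain_exists:
  assumes step: "\<And>A B. P A B \<Longrightarrow> \<exists>C. R A B C \<and> P B C"
    and P_sym: "\<And>A B. P A B \<Longrightarrow> P B A"
    and sym: "\<And>A B C. R A B C \<Longrightarrow> R C B A"
    and "P A B"
  obtains z where "triple_chain R z" "z 0 = A" "z 1 = B"
proof -
  obtain f where f: "f 0 = A" "f 1 = B" "\<And>n. R (f n) (f (Suc n)) (f (Suc (Suc n)))"
    using triple_ray_exists[of P R, OF step \<open>P A B\<close>] by blast
  obtain g where g: "g 0 = B" "g 1 = A" "\<And>n. R (g n) (g (Suc n)) (g (Suc (Suc n)))"
    using triple_ray_exists[of P R, OF step P_sym[OF \<open>P A B\<close>]] by blast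
  define z where "z i = (if 0 \<le> i then f (nat i) else g (nat (1 - i)))" for i
  have z_nonneg: "z (int n) = f n" for n
    by (simp add: z_def)
  have z_le_1: "z (1 - int n) = g n" for n
    using f g by (cases n) (auto simp: z_def simp flip: of_nat_Suc)
  have "R (z i) (z (i + 1)) (z (i + 2))" for i
  proof (cases "0 \<le> i")
    case True
    then obtain n where "i = int n" using nonneg_int_cases by blast
    then show ?thesis using f(3)[of n] z_nonneg[of "Suc n"] z_nonneg[of "Suc (Suc n)"]
      by (simp add: z_nonneg add.commute)
  next
    case False
    define n where "n = nat (- 1 - i)"
    have "i = 1 - int (Suc (Suc n))" using False by (simp add: n_def)
    then show ?thesis using sym[OF g(3)[of n]] z_le_1[of n] z_le_1[of "Suc n"] z_le_1[of "Suc (Suc n)"]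
      by simp
  qed
  then show ?thesis using that[of z] f z_nonneg[of 0] z_nonneg[of 1] unfolding triple_chain_def by simp
qed

lemma zrev_zrev [simp]: "zrev (zrev z) = z"
  by (simp add: zrev_def)

lemma zshift_zshift: "zshift a (zshift b z) = zshift (a + b) z"
  by (simp add: zshift_def ac_simps)

lemma zshift_0 [simp]: "zshift 0 z = z"
  by (simp add: zshift_def)

lemma edge_types_of_two_passages:
  assumes "passages T e = {q1, q2}" "q1 \<noteq> q2"
  shows "edge_type_II T e \<longleftrightarrow> pdir q1 = pdir q2"
    and "edge_type_I T e \<longleftrightarrow> pdir q1 \<noteq> pdir q2"
    and "type_II_directed T e u v \<longleftrightarrow> pdir q1 = (u, v) \<and> pdir q2 = (u, v)"
  using assms unfolding edge_type_I_def edge_type_II_def type_II_directed_def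
  by (auto simp: doubleton_eq_iff)

text \<open>Only the local structure of a triangulation matters: faces are triangles and every edge
  lies on exactly two faces.\<close>

locale pseudo_surface =
  fixes Fs :: "'v set set"
  assumes face_card: "F \<in> Fs \<Longrightarrow> card F = 3"
    and edge_face_count: "e \<in> tri_edges Fs \<Longrightarrow> card {F \<in> Fs. e \<subseteq> F} = 2"
begin

definition flag :: "'v \<Rightarrow> 'v \<Rightarrow> 'v \<Rightarrow> bool" where
  "flag x y w \<longleftrightarrow> x \<noteq> y \<and> y \<noteq> w \<and> x \<noteq> w \<and> {x, y, w} \<in> Fs"

lemma flag_perms:
  assumes "flag x y w"
  shows "flag y x w" "flag y w x" "flag w y x" "flag w x y" "flag x w y"
  using assms unfolding flag_def by (auto simp: insert_commute)

lemma flag_edge: "flag x y w \<Longrightarrow> {x, y} \<in> tri_edges Fs"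
  unfolding flag_def tri_edges_def by auto

lemma face_obtain_flag:
  assumes "F \<in> Fs"
  obtains a b c where "F = {a, b, c}" "flag a b c"
  using face_card[OF assms] assms unfolding flag_def card_3_iff by blast

lemma flag_third_vertex_unique:
  assumes "flag x y w" "flag x y u" "flag x y u'" "u \<noteq> w" "u' \<noteq> w"
  shows "u = u'"
proof (rule ccontr)
  assume "u \<noteq> u'"
  let ?S = "{F \<in> Fs. {x, y} \<subseteq> F}"
  have faces: "{x, y, w} \<in> ?S" "{x, y, u} \<in> ?S" "{x, y, u'} \<in> ?S"
    using assms unfolding flag_def by auto
  have new: "u \<notin> {x, y, w}" "u' \<notin> {x, y, w}" "u' \<notin> {x, y, u}"
    using assms \<open>u \<noteq> u'\<close> unfolding flag_def by auto
  then have "{x, y, w} \<noteq> {x, y, u}"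
    by blast
  then have "?S = {{x, y, w}, {x, y, u}}"
    using card_2_eq_doubleton[OF edge_face_count[OF flag_edge[OF assms(1)]] faces(1,2)] by simp
  then have "{x, y, u'} \<in> {{x, y, w}, {x, y, u}}"
    using faces(3) by simp
  then have "{x, y, u'} = {x, y, w} \<or> {x, y, u'} = {x, y, u}"
    by blast
  then show False
    using new by blast
qed

lemma flag_other_face:
  assumes "flag x y w"
  obtains u where "flag x y u" "u \<noteq> w"
proof -
  let ?S = "{F \<in> Fs. {x, y} \<subseteq> F}"
  have "card ?S = 2" "{x, y, w} \<in> ?S"
    using edge_face_count[OF flag_edge[OF assms]] assms unfolding flag_def by auto
  moreover have "\<not> ?S \<subseteq> {{x, y, w}}"
    using card_mono[of "{{x, y, w}}" ?S] \<open>card ?S = 2\<close> by auto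
  ultimately obtain G where G: "G \<in> Fs" "{x, y} \<subseteq> G" "G \<noteq> {x, y, w}"
    by blast
  have "card G = 3" using face_card G(1) .
  then have "\<not> G \<subseteq> {x, y}"
    using card_mono[of "{x, y}" G] assms unfolding flag_def by auto
  then obtain u where u: "u \<in> G" "u \<noteq> x" "u \<noteq> y" by blast
  have "{x, y, u} = G"
    using G u \<open>card G = 3\<close> assms unfolding flag_def
    by (intro card_subset_eq) (auto simp: card_ge_0_finite)
  then show ?thesis
    using that[of u] G assms u unfolding flag_def by auto
qed

definition adjacent :: "'v set \<Rightarrow> 'v set \<Rightarrow> bool" where
  "adjacent A B \<longleftrightarrow> A \<in> tri_edges Fs \<and> B \<in> tri_edges Fs \<and> A \<noteq> B \<and> (\<exists>F \<in> Fs. A \<subseteq> F \<and> B \<subseteq> F)"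

lemma adjacent_sym: "adjacent A B \<Longrightarrow> adjacent B A"
  unfolding adjacent_def by blast

lemma adjacent_iff: "adjacent A B \<longleftrightarrow> (\<exists>x y w. flag x y w \<and> A = {x, y} \<and> B = {y, w})"
proof
  assume "adjacent A B"
  then obtain G where "A \<in> tri_edges Fs" "B \<in> tri_edges Fs" "A \<noteq> B" "G \<in> Fs" "A \<subseteq> G" "B \<subseteq> G"
    unfolding adjacent_def by blast
  moreover have "card A = 2" "card B = 2" "card G = 3"
    using \<open>A \<in> tri_edges Fs\<close> \<open>B \<in> tri_edges Fs\<close> face_card[OF \<open>G \<in> Fs\<close>]
    unfolding tri_edges_def by simp_all
  ultimately obtain x y w where "x \<noteq> y" "y \<noteq> w" "x \<noteq> w" "A = {x, y}" "B = {y, w}" "G = {x, y, w}"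
    using two_subsets_of_triangle[of A B G] by blast
  moreover have "flag x y w"
    unfolding flag_def using calculation \<open>G \<in> Fs\<close> by simp
  ultimately show "\<exists>x y w. flag x y w \<and> A = {x, y} \<and> B = {y, w}"
    by blast
next
  assume "\<exists>x y w. flag x y w \<and> A = {x, y} \<and> B = {y, w}"
  then obtain x y w where xyw: "flag x y w" "A = {x, y}" "B = {y, w}"
    by blast
  have "{x, y} \<noteq> {y, w}" "{x, y} \<subseteq> {x, y, w}" "{y, w} \<subseteq> {x, y, w}" "{x, y, w} \<in> Fs"
    using xyw(1) unfolding flag_def by (auto simp: doubleton_eq_iff)
  then show "adjacent A B"
    using flag_edge[OF xyw(1)] flag_edge[OF flag_perms(2)[OF xyw(1)]]
    unfolding adjacent_def xyw(2,3) by blast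
qed

text \<open>A \<union> B is the face containing the adjacent edges A and B.\<close>

definition zig_step :: "'v set \<Rightarrow> 'v set \<Rightarrow> 'v set \<Rightarrow> bool" where
  "zig_step A B C \<longleftrightarrow> adjacent A B \<and> adjacent B C \<and> A \<union> B \<noteq> B \<union> C \<and> A \<inter> C = {}"

lemma zig_step_sym: "zig_step A B C \<Longrightarrow> zig_step C B A"
  unfolding zig_step_def using adjacent_sym by blast

lemma zig_step_flag_iff:
  assumes "flag x y w"
  shows "zig_step {x, y} {y, w} C \<longleftrightarrow> (\<exists>u. flag y w u \<and> u \<noteq> x \<and> C = {w, u})"
proof
  assume step: "zig_step {x, y} {y, w} C"
  then have "adjacent {y, w} C" "{x, y} \<inter> C = {}"
    unfolding zig_step_def by blast+
  moreover obtain p q u where "flag p q u" "{y, w} = {p, q}" "C = {q, u}"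
    using \<open>adjacent {y, w} C\<close> unfolding adjacent_iff by blast
  ultimately have "p = y" "q = w" "C = {w, u}" "u \<noteq> x"
    by (auto simp: doubleton_eq_iff)
  then show "\<exists>u. flag y w u \<and> u \<noteq> x \<and> C = {w, u}"
    using \<open>flag p q u\<close> by blast
next
  assume "\<exists>u. flag y w u \<and> u \<noteq> x \<and> C = {w, u}"
  then obtain u where u: "flag y w u" "u \<noteq> x" "C = {w, u}" by blast
  have "adjacent {x, y} {y, w}" "adjacent {y, w} {w, u}"
    unfolding adjacent_iff using assms u(1) by blast+
  moreover have "{x, y} \<union> {y, w} \<noteq> {y, w} \<union> {w, u}" "{x, y} \<inter> {w, u} = {}"
    using assms u unfolding flag_def by auto
  ultimately show "zig_step {x, y} {y, w} C"
    unfolding zig_step_def u(3) by blast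
qed

lemma zig_step_unique:
  assumes "zig_step A B C" "zig_step A B C'"
  shows "C = C'"
proof -
  have "adjacent A B"
    using assms(1) unfolding zig_step_def by blast
  then obtain x y w where xyw: "flag x y w" "A = {x, y}" "B = {y, w}"
    unfolding adjacent_iff by blast
  have "zig_step {x, y} {y, w} C" "zig_step {x, y} {y, w} C'"
    using assms unfolding xyw(2,3) .
  then obtain u u' where "flag y w u" "u \<noteq> x" "C = {w, u}" "flag y w u'" "u' \<noteq> x" "C' = {w, u'}"
    unfolding zig_step_flag_iff[OF xyw(1)] by blast
  then have "u = u'"
    using flag_third_vertex_unique[OF flag_perms(2)[OF xyw(1)]] by blast
  then show ?thesis
    using \<open>C = {w, u}\<close> \<open>C' = {w, u'}\<close> by simp
qed

lemma zig_step_exists: "adjacent A B \<Longrightarrow> \<exists>C. zig_step A B C \<and> adjacent B C"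
proof -
  assume "adjacent A B"
  then obtain x y w where xyw: "flag x y w" "A = {x, y}" "B = {y, w}"
    unfolding adjacent_iff by blast
  obtain u where "flag y w u" "u \<noteq> x"
    using flag_other_face[OF flag_perms(2)[OF xyw(1)]] .
  then have "zig_step A B {w, u}" "adjacent B {w, u}"
    using zig_step_flag_iff[OF xyw(1)] unfolding xyw(2,3) adjacent_iff by blast+
  then show ?thesis
    by blast
qed

lemma is_zigzag_iff: "is_zigzag Fs z \<longleftrightarrow> triple_chain zig_step z"
proof
  assume "is_zigzag Fs z"
  then show "triple_chain zig_step z"
    unfolding triple_chain_def
  proof (intro allI)
    fix i
    have "z (i + 1) \<in> tri_edges Fs \<and> z (i + 1) \<noteq> z (i + 1 + 1) \<and>
        (\<exists>F\<in>Fs. z (i + 1) \<subseteq> F \<and> z (i + 1 + 1) \<subseteq> F)"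
      using \<open>is_zigzag Fs z\<close> unfolding is_zigzag_def by blast
    then show "zig_step (z i) (z (i + 1)) (z (i + 2))"
      using \<open>is_zigzag Fs z\<close> unfolding is_zigzag_def zig_step_def adjacent_def
      by (simp add: add.assoc)
  qed
qed (auto simp: is_zigzag_def triple_chain_def zig_step_def adjacent_def)

lemma zigzag_eqI:
  assumes "is_zigzag Fs z" "is_zigzag Fs z'" "z 0 = z' 0" "z 1 = z' 1"
  shows "z = z'"
  using triple_chain_eqI[of zig_step z z'] zig_step_unique zig_step_sym assms
  unfolding is_zigzag_iff by blast

lemma zigzag_exists:
  assumes "adjacent A B"
  obtains z where "is_zigzag Fs z" "z 0 = A" "z 1 = B"
  using triple_chain_exists[of adjacent zig_step A B] zig_step_exists adjacent_sym zig_step_sym assms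
  unfolding is_zigzag_iff by blast

lemma zigzag_zshift: "is_zigzag Fs z \<Longrightarrow> is_zigzag Fs (zshift k z)"
  unfolding is_zigzag_iff zshift_def by (rule triple_chain_shift)

lemma zigzag_zrev: "is_zigzag Fs z \<Longrightarrow> is_zigzag Fs (zrev z)"
  unfolding is_zigzag_iff zrev_def by (rule triple_chain_reverse[OF zig_step_sym])

lemma zigzag_local_shape:
  assumes "is_zigzag Fs z"
  obtains a b c u where "flag a b c" "flag b c u" "u \<noteq> a"
    "z (-1) = {a, b}" "z 0 = {b, c}" "z 1 = {c, u}"
proof -
  have "zig_step (z (-1)) (z (-1 + 1)) (z (-1 + 2))"
    using assms unfolding is_zigzag_iff triple_chain_def by blast
  then have step: "zig_step (z (-1)) (z 0) (z 1)"
    by simp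
  then have "adjacent (z (-1)) (z 0)"
    unfolding zig_step_def by blast
  then obtain a b c where abc: "flag a b c" "z (-1) = {a, b}" "z 0 = {b, c}"
    unfolding adjacent_iff by blast
  then have "zig_step {a, b} {b, c} (z 1)"
    using step by simp
  then obtain u where "flag b c u" "u \<noteq> a" "z 1 = {c, u}"
    using zig_step_flag_iff[OF abc(1)] by blast
  then show ?thesis
    using that abc by blast
qed

lemma pdir_eqI:
  assumes "is_zigzag Fs z" "z 0 = {x, y}" "x \<noteq> y" "y \<in> z 1 \<or> x \<in> z (-1)"
  shows "pdir z = (x, y)"
proof -
  obtain a b c u where abcu: "flag a b c" "flag b c u" "u \<noteq> a"
    "z (-1) = {a, b}" "z 0 = {b, c}" "z 1 = {c, u}"
    using zigzag_local_shape[OF assms(1)] .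
  then have "z 0 \<inter> z (-1) = {b}" "z 0 \<inter> z 1 = {c}"
    unfolding flag_def by auto
  then have "pdir z = (b, c)"
    unfolding pdir_def by auto
  moreover have "b = x" "c = y"
    using abcu assms(2-4) unfolding flag_def by (auto simp: doubleton_eq_iff)
  ultimately show ?thesis
    by simp
qed

definition flag_zigzag :: "'v \<Rightarrow> 'v \<Rightarrow> 'v \<Rightarrow> int \<Rightarrow> 'v set" where
  "flag_zigzag x y w = (THE z. is_zigzag Fs z \<and> z 0 = {x, y} \<and> z 1 = {y, w})"

lemma flag_zigzag:
  assumes "flag x y w"
  shows "is_zigzag Fs (flag_zigzag x y w)" "flag_zigzag x y w 0 = {x, y}" "flag_zigzag x y w 1 = {y, w}"
proof -
  have "adjacent {x, y} {y, w}"
    unfolding adjacent_iff using assms by blast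
  then obtain z where z: "is_zigzag Fs z" "z 0 = {x, y}" "z 1 = {y, w}"
    by (rule zigzag_exists)
  have "\<exists>!z. is_zigzag Fs z \<and> z 0 = {x, y} \<and> z 1 = {y, w}"
  proof (rule ex1I[of _ z])
    fix z' assume "is_zigzag Fs z' \<and> z' 0 = {x, y} \<and> z' 1 = {y, w}"
    then show "z' = z"
      using z by (intro zigzag_eqI) simp_all
  qed (use z in simp)
  then have "is_zigzag Fs (flag_zigzag x y w) \<and> flag_zigzag x y w 0 = {x, y} \<and> flag_zigzag x y w 1 = {y, w}"
    unfolding flag_zigzag_def by (rule theI')
  then show "is_zigzag Fs (flag_zigzag x y w)" "flag_zigzag x y w 0 = {x, y}" "flag_zigzag x y w 1 = {y, w}"
    by simp_all
qed

lemma flag_zigzag_eqI: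
  assumes "flag x y w" "is_zigzag Fs z" "z 0 = {x, y}" "z 1 = {y, w}"
  shows "z = flag_zigzag x y w"
  by (rule zigzag_eqI[OF assms(2) flag_zigzag(1)[OF assms(1)]]) (simp_all add: flag_zigzag assms)

lemma zrev_flag_zigzag:
  assumes "flag x y w"
  shows "zrev (flag_zigzag x y w) = zshift 1 (flag_zigzag w y x)"
proof -
  let ?z = "zshift (-1) (zrev (flag_zigzag x y w))"
  have "is_zigzag Fs ?z"
    using zigzag_zshift zigzag_zrev flag_zigzag(1)[OF assms] by blast
  moreover have "?z 0 = {w, y}" "?z 1 = {y, x}"
    using flag_zigzag(2,3)[OF assms] by (simp_all add: zshift_def zrev_def insert_commute)
  ultimately have "?z = flag_zigzag w y x"
    using flag_zigzag_eqI flag_perms(3)[OF assms] by blast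
  then show ?thesis
    by (metis zshift_zshift zshift_0 add.right_inverse)
qed

lemma pdir_flag_zigzag: "flag x y w \<Longrightarrow> pdir (flag_zigzag x y w) = (x, y)"
  using pdir_eqI[OF flag_zigzag(1,2)] flag_zigzag(3) unfolding flag_def by blast

lemma pdir_zrev_flag_zigzag: "flag x y w \<Longrightarrow> pdir (zrev (flag_zigzag x y w)) = (y, x)"
  using pdir_eqI[OF zigzag_zrev[OF flag_zigzag(1)], of x y w y x] flag_zigzag(2,3)[of x y w]
  unfolding flag_def zrev_def by (auto simp: insert_commute)

lemma zigzag_through_flag_edge:
  assumes "flag x y w" "is_zigzag Fs z" "z 0 = {x, y}"
  obtains p q where "flag p q w" "{p, q} = {x, y}" "z = flag_zigzag p q w \<or> z = zrev (flag_zigzag p q w)"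
proof -
  obtain a b c u where abcu: "flag a b c" "flag b c u" "u \<noteq> a"
    "z (-1) = {a, b}" "z 0 = {b, c}" "z 1 = {c, u}"
    using zigzag_local_shape[OF assms(2)] .
  have bc: "{b, c} = {x, y}"
    using abcu assms(3) by simp
  then have "flag b c w"
    using assms(1) flag_perms(1) unfolding doubleton_eq_iff by blast
  then have "w = a \<or> w = u"
    \<comment> \<open>{a, b, c} and {b, c, u} are the two faces at the edge {x, y}\<close>
    using flag_third_vertex_unique[OF flag_perms(2)[OF abcu(1)] abcu(2) \<open>flag b c w\<close> abcu(3)] by blast
  then show ?thesis
  proof
    assume "w = u"
    then have "z = flag_zigzag b c w"
      using flag_zigzag_eqI[OF \<open>flag b c w\<close> assms(2)] abcu by simp
    then show ?thesis
      using that[of b c] \<open>flag b c w\<close> bc by blast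
  next
    assume "w = a"
    have "flag c b w"
      using flag_perms(1)[OF \<open>flag b c w\<close>] .
    moreover have "zrev z 0 = {c, b}" "zrev z 1 = {b, w}"
      using abcu \<open>w = a\<close> by (simp_all add: zrev_def insert_commute)
    ultimately have "zrev z = flag_zigzag c b w"
      using flag_zigzag_eqI zigzag_zrev[OF assms(2)] by blast
    then have "z = zrev (flag_zigzag c b w)"
      by (metis zrev_zrev)
    moreover have "{c, b} = {x, y}"
      using bc by (simp add: insert_commute)
    ultimately show ?thesis
      using that[of c b] \<open>flag c b w\<close> by blast
  qed
qed

end

lemma triangulation_pseudo_surface: "triangulation V Fs \<Longrightarrow> pseudo_surface Fs"
  unfolding triangulation_def by unfold_locales auto

locale z_oriented_pseudo_surface = pseudo_surface Fs for Fs :: "'v set set" +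
  fixes T :: "(int \<Rightarrow> 'v set) set"
  assumes z_orientation: "z_orientation Fs T"
begin

lemma zigzag_of_T: "z \<in> T \<Longrightarrow> is_zigzag Fs z"
  using z_orientation unfolding z_orientation_def by blast

lemma zshift_in_T_iff: "zshift k z \<in> T \<longleftrightarrow> z \<in> T"
proof
  assume "zshift k z \<in> T"
  then have "zshift (- k) (zshift k z) \<in> T"
    using z_orientation unfolding z_orientation_def by blast
  then show "z \<in> T"
    by (simp add: zshift_zshift)
qed (use z_orientation in \<open>auto simp: z_orientation_def\<close>)

lemma zrev_in_T_iff: "is_zigzag Fs z \<Longrightarrow> zrev z \<in> T \<longleftrightarrow> z \<notin> T"
  using z_orientation unfolding z_orientation_def by blast

definition oriented :: "'v \<Rightarrow> 'v \<Rightarrow> 'v \<Rightarrow> bool" where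
  "oriented x y w \<longleftrightarrow> flag_zigzag x y w \<in> T"

lemma oriented_reverse: "flag x y w \<Longrightarrow> oriented w y x \<longleftrightarrow> \<not> oriented x y w"
  using zrev_in_T_iff[OF flag_zigzag(1)] zrev_flag_zigzag zshift_in_T_iff
  unfolding oriented_def by metis

text \<open>The passage of T through the edge {x, y} that crosses the face {x, y, w} at y.\<close>

definition passage_at :: "'v \<Rightarrow> 'v \<Rightarrow> 'v \<Rightarrow> int \<Rightarrow> 'v set" where
  "passage_at x y w = (if oriented x y w then flag_zigzag x y w else zrev (flag_zigzag x y w))"

lemma passage_at_in_passages:
  assumes "flag x y w"
  shows "passage_at x y w \<in> passages T {x, y}"
proof -
  have "passage_at x y w \<in> T"
    using zrev_in_T_iff[OF flag_zigzag(1)[OF assms]] unfolding passage_at_def oriented_def by simp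
  moreover have "passage_at x y w 0 = {x, y}"
    using flag_zigzag(2)[OF assms] unfolding passage_at_def zrev_def by simp
  ultimately show ?thesis
    unfolding passages_def by simp
qed

lemma pdir_passage_at:
  "flag x y w \<Longrightarrow> pdir (passage_at x y w) = (if oriented x y w then (x, y) else (y, x))"
  unfolding passage_at_def by (simp add: pdir_flag_zigzag pdir_zrev_flag_zigzag)

lemma passage_at_neighbour:
  assumes "flag x y w"
  shows "passage_at x y w 1 = {y, w} \<or> passage_at x y w (-1) = {y, w}"
  using flag_zigzag(3)[OF assms] unfolding passage_at_def zrev_def by simp

lemma passage_at_swap_neq:
  assumes "flag x y w"
  shows "passage_at x y w \<noteq> passage_at y x w"
proof
  let ?q = "passage_at x y w"
  assume eq: "?q = passage_at y x w"
  have "is_zigzag Fs ?q"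
    using zigzag_of_T passage_at_in_passages[OF assms] unfolding passages_def by blast
  then have "?q (-1) \<inter> ?q (-1 + 2) = {}"
    unfolding is_zigzag_def by blast
  moreover have "?q 1 = {y, w} \<or> ?q (-1) = {y, w}" "?q 1 = {x, w} \<or> ?q (-1) = {x, w}"
    using passage_at_neighbour[OF assms] passage_at_neighbour[OF flag_perms(1)[OF assms]] eq by simp_all
  moreover have "{y, w} \<noteq> {x, w}"
    using assms unfolding flag_def by (auto simp: doubleton_eq_iff)
  \<comment> \<open>{y, w} and {x, w} would be the two neighbours of the passage, which are disjoint\<close>
  ultimately show False
    by auto
qed

lemma passages_flag_edge:
  assumes "flag x y w"
  shows "passages T {x, y} = {passage_at x y w, passage_at y x w}"
proof
  show "{passage_at x y w, passage_at y x w} \<subseteq> passages T {x, y}"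
    using passage_at_in_passages[OF assms] passage_at_in_passages[OF flag_perms(1)[OF assms]]
    by (simp add: insert_commute)
next
  show "passages T {x, y} \<subseteq> {passage_at x y w, passage_at y x w}"
  proof
    fix z assume "z \<in> passages T {x, y}"
    then have "z \<in> T" "z 0 = {x, y}"
      unfolding passages_def by auto
    then obtain p q where pq: "flag p q w" "{p, q} = {x, y}"
      and "z = flag_zigzag p q w \<or> z = zrev (flag_zigzag p q w)"
      using zigzag_through_flag_edge[OF assms zigzag_of_T] by blast
    then have "z = passage_at p q w"
      using \<open>z \<in> T\<close> zrev_in_T_iff[OF flag_zigzag(1)[OF pq(1)]]
      unfolding passage_at_def oriented_def by auto
    then show "z \<in> {passage_at x y w, passage_at y x w}"
      using pq(2) by (auto simp: doubleton_eq_iff)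
  qed
qed

lemma edge_types_at_flag:
  assumes "flag x y w"
  shows "edge_type_II T {x, y} \<longleftrightarrow> (oriented x y w \<longleftrightarrow> oriented w x y)"
    and "edge_type_I T {x, y} \<longleftrightarrow> \<not> (oriented x y w \<longleftrightarrow> oriented w x y)"
    and "type_II_directed T {x, y} x y \<longleftrightarrow> oriented x y w \<and> oriented w x y"
proof -
  have yxw: "flag y x w"
    using flag_perms(1)[OF assms] .
  have "oriented y x w \<longleftrightarrow> \<not> oriented w x y"
    using oriented_reverse[OF flag_perms(4)[OF assms]] by blast
  then have dirs: "pdir (passage_at x y w) = (if oriented x y w then (x, y) else (y, x))"
    "pdir (passage_at y x w) = (if oriented w x y then (x, y) else (y, x))"
    using pdir_passage_at[OF assms] pdir_passage_at[OF yxw] by simp_all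
  have "x \<noteq> y"
    using assms unfolding flag_def by blast
  note types = edge_types_of_two_passages[OF passages_flag_edge[OF assms] passage_at_swap_neq[OF assms]]
  show "edge_type_II T {x, y} \<longleftrightarrow> (oriented x y w \<longleftrightarrow> oriented w x y)"
    using types(1) dirs \<open>x \<noteq> y\<close> by auto
  show "edge_type_I T {x, y} \<longleftrightarrow> \<not> (oriented x y w \<longleftrightarrow> oriented w x y)"
    using types(2) dirs \<open>x \<noteq> y\<close> by auto
  show "type_II_directed T {x, y} x y \<longleftrightarrow> oriented x y w \<and> oriented w x y"
    using types(3) dirs \<open>x \<noteq> y\<close> by auto
qed

definition coherent :: "'v \<Rightarrow> 'v \<Rightarrow> 'v \<Rightarrow> bool" where
  "coherent a b c \<longleftrightarrow> oriented a b c = oriented b c a \<and> oriented b c a = oriented c a b"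

lemma coherent_reverse: "flag a b c \<Longrightarrow> coherent c b a \<longleftrightarrow> coherent a b c"
  unfolding coherent_def
  using oriented_reverse[of a b c] oriented_reverse[OF flag_perms(2), of a b c]
    oriented_reverse[OF flag_perms(4), of a b c]
  by blast

lemma coherent_reorder:
  assumes "flag a b c" "{a', b', c'} = {a, b, c}" "a' \<noteq> b'" "b' \<noteq> c'" "a' \<noteq> c'"
  shows "coherent a' b' c' \<longleftrightarrow> coherent a b c"
proof -
  have rotate: "coherent b c a \<longleftrightarrow> coherent a b c" "coherent c a b \<longleftrightarrow> coherent a b c"
    unfolding coherent_def by auto
  have "(a', b', c') \<in> {(a, b, c), (b, c, a), (c, a, b), (c, b, a), (b, a, c), (a, c, b)}"
    by (rule triple_orderings[OF assms(2-5)])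
  then show ?thesis
    using coherent_reverse[OF assms(1)] coherent_reverse[OF flag_perms(2)[OF assms(1)]]
      coherent_reverse[OF flag_perms(4)[OF assms(1)]]
    by (elim insertE emptyE) (simp_all add: rotate)
qed

lemma config_I_iff_oriented:
  assumes "flag a b c"
  shows "edge_type_II T {a, b} \<and> edge_type_I T {b, c} \<and> edge_type_I T {c, a} \<longleftrightarrow>
    oriented a b c = oriented c a b \<and> oriented b c a \<noteq> oriented a b c"
  using edge_types_at_flag(1)[OF assms] edge_types_at_flag(2)[OF flag_perms(2)[OF assms]]
    edge_types_at_flag(2)[OF flag_perms(4)[OF assms]]
  by blast

lemma directed_cycle_iff_oriented:
  assumes "flag a b c"
  shows "type_II_directed T {a, b} a b \<and> type_II_directed T {b, c} b c \<and> type_II_directed T {c, a} c a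
    \<longleftrightarrow> oriented a b c \<and> oriented b c a \<and> oriented c a b"
  using edge_types_at_flag(3)[OF assms] edge_types_at_flag(3)[OF flag_perms(2)[OF assms]]
    edge_types_at_flag(3)[OF flag_perms(4)[OF assms]]
  by blast

lemma ex_config_I_iff_not_coherent:
  assumes "flag a b c"
  shows "(\<exists>a' b' c'. {a, b, c} = {a', b', c'} \<and> a' \<noteq> b' \<and> b' \<noteq> c' \<and> a' \<noteq> c' \<and>
      edge_type_II T {a', b'} \<and> edge_type_I T {b', c'} \<and> edge_type_I T {c', a'})
    \<longleftrightarrow> \<not> coherent a b c"
proof
  assume "\<exists>a' b' c'. {a, b, c} = {a', b', c'} \<and> a' \<noteq> b' \<and> b' \<noteq> c' \<and> a' \<noteq> c' \<and>
      edge_type_II T {a', b'} \<and> edge_type_I T {b', c'} \<and> edge_type_I T {c', a'}"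
  then obtain a' b' c' where abc': "{a, b, c} = {a', b', c'}" "a' \<noteq> b'" "b' \<noteq> c'" "a' \<noteq> c'"
    and types: "edge_type_II T {a', b'} \<and> edge_type_I T {b', c'} \<and> edge_type_I T {c', a'}"
    by blast
  have "flag a' b' c'"
    using assms abc' unfolding flag_def by simp
  then have "\<not> coherent a' b' c'"
    using types config_I_iff_oriented unfolding coherent_def by blast
  then show "\<not> coherent a b c"
    using coherent_reorder[OF assms abc'(1)[symmetric] abc'(2-4)] by blast
next
  assume "\<not> coherent a b c"
  then consider "oriented a b c = oriented c a b" "oriented b c a \<noteq> oriented a b c"
    | "oriented b c a = oriented a b c" "oriented c a b \<noteq> oriented b c a"
    | "oriented c a b = oriented b c a" "oriented a b c \<noteq> oriented c a b"
    unfolding coherent_def by blast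
  then show "\<exists>a' b' c'. {a, b, c} = {a', b', c'} \<and> a' \<noteq> b' \<and> b' \<noteq> c' \<and> a' \<noteq> c' \<and>
      edge_type_II T {a', b'} \<and> edge_type_I T {b', c'} \<and> edge_type_I T {c', a'}"
  proof cases
    case 1
    then show ?thesis
      using config_I_iff_oriented[OF assms] assms unfolding flag_def by blast
  next
    case 2
    then have "edge_type_II T {b, c} \<and> edge_type_I T {c, a} \<and> edge_type_I T {a, b}"
      using config_I_iff_oriented[OF flag_perms(2)[OF assms]] by blast
    moreover have "{a, b, c} = {b, c, a}"
      by (simp add: insert_commute)
    ultimately show ?thesis
      using assms unfolding flag_def by blast
  next
    case 3
    then have "edge_type_II T {c, a} \<and> edge_type_I T {a, b} \<and> edge_type_I T {b, c}"
      using config_I_iff_oriented[OF flag_perms(4)[OF assms]] by blast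
    moreover have "{a, b, c} = {c, a, b}"
      by (simp add: insert_commute)
    ultimately show ?thesis
      using assms unfolding flag_def by blast
  qed
qed

lemma ex_directed_cycle_iff_coherent:
  assumes "flag a b c"
  shows "(\<exists>a' b' c'. {a, b, c} = {a', b', c'} \<and> a' \<noteq> b' \<and> b' \<noteq> c' \<and> a' \<noteq> c' \<and>
      type_II_directed T {a', b'} a' b' \<and> type_II_directed T {b', c'} b' c' \<and>
      type_II_directed T {c', a'} c' a')
    \<longleftrightarrow> coherent a b c"
proof
  assume "\<exists>a' b' c'. {a, b, c} = {a', b', c'} \<and> a' \<noteq> b' \<and> b' \<noteq> c' \<and> a' \<noteq> c' \<and>
      type_II_directed T {a', b'} a' b' \<and> type_II_directed T {b', c'} b' c' \<and>
      type_II_directed T {c', a'} c' a'"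
  then obtain a' b' c' where abc': "{a, b, c} = {a', b', c'}" "a' \<noteq> b'" "b' \<noteq> c'" "a' \<noteq> c'"
    and cycle: "type_II_directed T {a', b'} a' b' \<and> type_II_directed T {b', c'} b' c' \<and>
      type_II_directed T {c', a'} c' a'"
    by blast
  have "flag a' b' c'"
    using assms abc' unfolding flag_def by simp
  then have "coherent a' b' c'"
    using cycle directed_cycle_iff_oriented unfolding coherent_def by blast
  then show "coherent a b c"
    using coherent_reorder[OF assms abc'(1)[symmetric] abc'(2-4)] by blast
next
  assume "coherent a b c"
  show "\<exists>a' b' c'. {a, b, c} = {a', b', c'} \<and> a' \<noteq> b' \<and> b' \<noteq> c' \<and> a' \<noteq> c' \<and>
      type_II_directed T {a', b'} a' b' \<and> type_II_directed T {b', c'} b' c' \<and>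
      type_II_directed T {c', a'} c' a'"
  proof (cases "oriented a b c")
    case True
    then show ?thesis
      using \<open>coherent a b c\<close> directed_cycle_iff_oriented[OF assms] assms unfolding coherent_def flag_def by blast
  next
    case False
    have "flag c b a"
      using flag_perms(3)[OF assms] .
    moreover have "coherent c b a" "oriented c b a"
      using \<open>coherent a b c\<close> coherent_reverse[OF assms] oriented_reverse[OF assms] False by blast+
    ultimately have "type_II_directed T {c, b} c b \<and> type_II_directed T {b, a} b a \<and>
        type_II_directed T {a, c} a c"
      using directed_cycle_iff_oriented unfolding coherent_def by blast
    moreover have "{a, b, c} = {c, b, a}"
      by (simp add: insert_commute)
    ultimately show ?thesis
      using assms unfolding flag_def by blast
  qed
qed

end

theorem proposition1:
  fixes V :: "'v set" and Fs :: "'v set set" and T :: "(int \<Rightarrow> 'v set) set"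
  assumes "triangulation V Fs"
    and "z_orientation Fs T"
    and "F \<in> Fs"
  shows "(\<exists>a b c. F = {a, b, c} \<and> a \<noteq> b \<and> b \<noteq> c \<and> a \<noteq> c \<and>
            edge_type_II T {a, b} \<and> edge_type_I T {b, c} \<and> edge_type_I T {c, a})
       \<noteq> (\<exists>a b c. F = {a, b, c} \<and> a \<noteq> b \<and> b \<noteq> c \<and> a \<noteq> c \<and>
            type_II_directed T {a, b} a b \<and> type_II_directed T {b, c} b c \<and>
            type_II_directed T {c, a} c a)"
proof -
  interpret z_oriented_pseudo_surface Fs T
    using triangulation_pseudo_surface[OF assms(1)] assms(2)
    by (simp add: z_oriented_pseudo_surface_def z_oriented_pseudo_surface_axioms_def)
  obtain a b c where "F = {a, b, c}" "flag a b c"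
    using face_obtain_flag[OF assms(3)] .
  then show ?thesis
    unfolding \<open>F = {a, b, c}\<close> ex_config_I_iff_not_coherent[OF \<open>flag a b c\<close>] ex_directed_cycle_iff_coherent[OF \<open>flag a b c\<close>]
    by simp
qed

end
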